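(* For $m\ge 3$, the group $\mathrm{SL}_m(\mathbb{Z})$ has exponential automorphic growth.
   Context: For a finitely generated group $G$ with finite generating set $\Sigma$, the automorphic growth function sends $n$ to the number of $\operatorname{Aut}(G)$-orbits of $G$ containing an element of word length at most $n$. Exponential means it is $\sim$-equivalent to $n\mapsto 2^n$, where $f\sim g$ iff $f\preccurlyeq g$ and $g\preccurlyeq f$, and $f\preccurlyeq g$ means there is $\lambda\in\mathbb{N}\setminus\{0\}$ with $f(n)\le\lambda g(\lambda n+\lambda)+\lambda$ for all $n$. *)

theory Defs
  imports "HOL-Analysis.Determinants" "HOL-Algebra.Generated_Groups"
begin

definition growth_le :: "(nat \<Rightarrow> nat) \<Rightarrow> (nat \<Rightarrow> nat) \<Rightarrow> bool" where
  "growth_le f g \<longleftrightarrow> (\<exists>l::nat. l \<noteq> 0 \<and> (\<forall>n. f n \<le> l * g (l * n + l) + l))"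

definition growth_equiv :: "(nat \<Rightarrow> nat) \<Rightarrow> (nat \<Rightarrow> nat) \<Rightarrow> bool" where
  "growth_equiv f g \<longleftrightarrow> growth_le f g \<and> growth_le g f"

text \<open>A word over S is a list of letters (b, s) with s in S; (True, s) stands for s and
  (False, s) for the inverse of s.\<close>

definition word_eval :: "('a, 'b) monoid_scheme \<Rightarrow> (bool \<times> 'a) list \<Rightarrow> 'a" where
  "word_eval G w = foldr (\<lambda>(b, s) acc. (if b then s else inv\<^bsub>G\<^esub> s) \<otimes>\<^bsub>G\<^esub> acc) w \<one>\<^bsub>G\<^esub>"

definition word_length :: "('a, 'b) monoid_scheme \<Rightarrow> 'a set \<Rightarrow> 'a \<Rightarrow> nat" where
  "word_length G S g =
     (LEAST n. \<exists>w. length w = n \<and> snd ` set w \<subseteq> S \<and> word_eval G w = g)"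

definition aut_orbit :: "('a, 'b) monoid_scheme \<Rightarrow> 'a \<Rightarrow> 'a set" where
  "aut_orbit G g = {\<phi> g | \<phi>. \<phi> \<in> iso G G}"

definition aut_growth :: "('a, 'b) monoid_scheme \<Rightarrow> 'a set \<Rightarrow> nat \<Rightarrow> nat" where
  "aut_growth G S n =
     card {aut_orbit G g | g. g \<in> carrier G \<and> word_length G S g \<le> n}"

definition exponential_aut_growth :: "('a, 'b) monoid_scheme \<Rightarrow> 'a set \<Rightarrow> bool" where
  "exponential_aut_growth G S \<longleftrightarrow> growth_equiv (aut_growth G S) (\<lambda>n. 2 ^ n)"

definition SL_group :: "(int ^ 'n ^ 'n) monoid" where
  "SL_group = \<lparr> carrier = {A. det A = 1}, monoid.mult = (**), one = mat 1 \<rparr>"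

end

theory Submission
  imports Defs "HOL-Combinatorics.Cycles" "HOL-Computational_Algebra.Squarefree"
begin

(* Every finitely generated group has at most exponentially many elements of word length n, which
   gives the upper bound.

   For the lower bound fix distinct indices i, j, l, put m = CARD('n) and g_s = E_il(s^m), where E_il
   is an elementary transvection. Being a p^m-th power is invariant under automorphisms, and g_s is a
   p^m-th power iff the prime p divides s: if x^(p^m) = E_il(N), then x^(p^(m+1)) fixes e_l modulo p;
   since the orbit of e_l under x modulo p has at most p^m points, already x^(p^m) fixes e_l modulo p,
   so p divides N. Hence the g_s with squarefree s lie in pairwise distinct orbits, and at least a
   quarter of the integers up to 2^(n+2) are squarefree.

   Each such g_s has word length O(n). The matrix A = E_ij(1) E_ji(1) normalises the subgroup
   {I + a e_il + b e_jl} = Z^2 and acts on it by [[2,1],[1,1]]; since A^k + A^-k = tr(A^k) I, writing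
   s^m with digits 0, 1, 2 in the "base" tr(A^k) >= 2^k expresses g_s as two Horner-type products of
   length linear in n. *)

section \<open>Word length and automorphic growth\<close>

lemma word_eval_Nil [simp]: "word_eval G [] = \<one>\<^bsub>G\<^esub>"
  and word_eval_Cons [simp]:
    "word_eval G ((b, s) # w) = (if b then s else inv\<^bsub>G\<^esub> s) \<otimes>\<^bsub>G\<^esub> word_eval G w"
  by (simp_all add: word_eval_def)

context group
begin

lemma word_eval_closed: "snd ` set w \<subseteq> carrier G \<Longrightarrow> word_eval G w \<in> carrier G"
  by (induction w) auto

lemma word_eval_append:
  "snd ` set w \<subseteq> carrier G \<Longrightarrow> snd ` set w' \<subseteq> carrier G \<Longrightarrow>
   word_eval G (w @ w') = word_eval G w \<otimes> word_eval G w'"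
  by (induction w) (auto simp: m_assoc word_eval_closed)

lemma generate_imp_word:
  assumes "S \<subseteq> carrier G" "g \<in> generate G S"
  shows "\<exists>w. snd ` set w \<subseteq> S \<and> word_eval G w = g"
  using assms(2)
proof (induction rule: generate.induct)
  case one
  show ?case by (intro exI[of _ "[]"]) simp
next
  case (incl h)
  then show ?case using assms(1) by (intro exI[of _ "[(True, h)]"]) auto
next
  case (inv h)
  then show ?case using assms(1) by (intro exI[of _ "[(False, h)]"]) auto
next
  case (eng h h')
  then obtain w w' where "snd ` set w \<subseteq> S" "word_eval G w = h" "snd ` set w' \<subseteq> S" "word_eval G w' = h'"
    by blast
  then show ?case using assms(1) by (intro exI[of _ "w @ w'"]) (auto simp: word_eval_append)
qed

end

lemma word_length_le: "snd ` set w \<subseteq> S \<Longrightarrow> word_length G S (word_eval G w) \<le> length w"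
  unfolding word_length_def by (rule Least_le) blast

lemma word_length_one: "word_length G S \<one>\<^bsub>G\<^esub> = 0"
  using word_length_le[of "[]" S G] by (simp add: word_eval_def)

lemma shortest_word:
  assumes "\<exists>w. snd ` set w \<subseteq> S \<and> word_eval G w = g"
  obtains w where "length w = word_length G S g" "snd ` set w \<subseteq> S" "word_eval G w = g"
  using LeastI_ex[of "\<lambda>n. \<exists>w. length w = n \<and> snd ` set w \<subseteq> S \<and> word_eval G w = g"] assms
  unfolding word_length_def by blast

locale generated_group = group +
  fixes S
  assumes gens_closed: "S \<subseteq> carrier G"
    and generate_gens: "generate G S = carrier G"
begin

abbreviation len :: "'a \<Rightarrow> nat" where "len \<equiv> word_length G S"

lemma shortest_word_carrier:
  assumes "g \<in> carrier G"
  obtains w where "length w = len g" "snd ` set w \<subseteq> S" "word_eval G w = g"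
  using shortest_word generate_imp_word[OF gens_closed] assms generate_gens by metis

lemma word_length_mult:
  assumes "g \<in> carrier G" "h \<in> carrier G"
  shows "len (g \<otimes> h) \<le> len g + len h"
proof -
  obtain w where w: "length w = len g" "snd ` set w \<subseteq> S" "word_eval G w = g"
    using shortest_word_carrier assms(1) .
  obtain w' where w': "length w' = len h" "snd ` set w' \<subseteq> S" "word_eval G w' = h"
    using shortest_word_carrier assms(2) .
  have "g \<otimes> h = word_eval G (w @ w')"
    using w w' gens_closed by (simp add: word_eval_append)
  moreover have "len (word_eval G (w @ w')) \<le> length (w @ w')"
    using w(2) w'(2) by (intro word_length_le) auto
  ultimately show ?thesis using w(1) w'(1) by simp
qed

lemma word_length_foldr_conj:
  assumes "a \<in> carrier G" "b \<in> carrier G" "f ` set ds \<subseteq> carrier G"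
    and "\<And>d. d \<in> set ds \<Longrightarrow> len (f d) \<le> D"
  shows "len (foldr (\<lambda>d x. f d \<otimes> (a \<otimes> x \<otimes> b)) ds \<one>) \<le> (D + len a + len b) * length ds"
  using assms(3,4)
proof (induction ds)
  case Nil
  show ?case by (simp add: word_length_one)
next
  case (Cons d ds)
  let ?x = "foldr (\<lambda>d x. f d \<otimes> (a \<otimes> x \<otimes> b)) ds \<one>"
  have x: "?x \<in> carrier G"
    using Cons.prems(1) assms(1,2) by (induction ds) auto
  have fd: "f d \<in> carrier G" using Cons.prems(1) by simp
  have "len (f d \<otimes> (a \<otimes> ?x \<otimes> b)) \<le> len (f d) + len (a \<otimes> ?x \<otimes> b)"
    using fd x assms(1,2) by (intro word_length_mult) auto
  also have "\<dots> \<le> len (f d) + (len (a \<otimes> ?x) + len b)"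
    using x assms(1,2) word_length_mult[of "a \<otimes> ?x" b] by simp
  also have "\<dots> \<le> len (f d) + (len a + len ?x + len b)"
    using x assms(1,2) word_length_mult[of a ?x] by simp
  also have "\<dots> \<le> D + (len a + (D + len a + len b) * length ds + len b)"
    using Cons by (intro add_mono) auto
  finally show ?case by (simp add: algebra_simps)
qed

lemma finite_word_ball: "finite S \<Longrightarrow> finite {g \<in> carrier G. len g \<le> n}"
  and card_word_ball_le: "finite S \<Longrightarrow> card {g \<in> carrier G. len g \<le> n} \<le> (\<Sum>i\<le>n. (2 * card S) ^ i)"
proof -
  assume assms: "finite S"
  let ?W = "{w :: (bool \<times> 'a) list. set w \<subseteq> UNIV \<times> S \<and> length w \<le> n}"
  have fin: "finite (UNIV \<times> S :: (bool \<times> 'a) set)" using assms by simp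
  have ball: "{g \<in> carrier G. len g \<le> n} \<subseteq> word_eval G ` ?W"
  proof
    fix g assume "g \<in> {g \<in> carrier G. len g \<le> n}"
    then obtain w where "length w = len g" "snd ` set w \<subseteq> S" "word_eval G w = g" "len g \<le> n"
      using shortest_word_carrier by blast
    then show "g \<in> word_eval G ` ?W" by force
  qed
  have finW: "finite ?W" using finite_lists_length_le[OF fin] by simp
  then show "finite {g \<in> carrier G. len g \<le> n}" using ball finite_subset by blast
  have "card {g \<in> carrier G. len g \<le> n} \<le> card (word_eval G ` ?W)"
    using ball finW by (intro card_mono) auto
  also have "\<dots> \<le> card ?W" using finW by (rule card_image_le)
  also have "\<dots> = (\<Sum>i\<le>n. (2 * card S) ^ i)"
    using card_lists_length_le[OF fin] assms by (simp add: card_cartesian_product)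
  finally show "card {g \<in> carrier G. len g \<le> n} \<le> (\<Sum>i\<le>n. (2 * card S) ^ i)" .
qed

end

lemma sum_powers_le_exp2: "(\<Sum>i\<le>n. (a::nat) ^ i) \<le> 2 ^ ((a + 1) * n)"
proof -
  have "(\<Sum>i\<le>n. a ^ i) \<le> (\<Sum>i\<le>n. (2::nat) ^ (a * n))"
  proof (rule sum_mono)
    fix i assume "i \<in> {..n}"
    have "a ^ i \<le> (2 ^ a) ^ i" by (rule power_mono) (simp_all add: less_imp_le[OF less_exp])
    also have "\<dots> \<le> 2 ^ (a * n)"
      using \<open>i \<in> {..n}\<close> by (simp add: power_mult[symmetric] power_increasing)
    finally show "a ^ i \<le> 2 ^ (a * n)" .
  qed
  also have "\<dots> = (n + 1) * 2 ^ (a * n)" by simp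
  also have "\<dots> \<le> 2 ^ n * 2 ^ (a * n)"
    by (intro mult_right_mono) (simp_all add: Suc_leI less_exp)
  also have "\<dots> = 2 ^ ((a + 1) * n)" by (simp add: power_add[symmetric] algebra_simps)
  finally show ?thesis .
qed

lemma aut_growth_eq_card: "aut_growth G S n = card (aut_orbit G ` {g \<in> carrier G. word_length G S g \<le> n})"
  unfolding aut_growth_def by (rule arg_cong[where f = card]) blast

context generated_group
begin

lemma aut_growth_le_exp:
  assumes "finite S"
  shows "growth_le (aut_growth G S) (\<lambda>n. 2 ^ n)"
proof -
  define l where "l = 2 * card S + 1"
  have "aut_growth G S n \<le> l * 2 ^ (l * n + l) + l" for n
  proof -
    have "aut_growth G S n \<le> card {g \<in> carrier G. len g \<le> n}"
      unfolding aut_growth_eq_card using finite_word_ball[OF assms] by (rule card_image_le)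
    also have "\<dots> \<le> (\<Sum>i\<le>n. (2 * card S) ^ i)" by (rule card_word_ball_le[OF assms])
    also have "\<dots> \<le> 2 ^ (l * n)" unfolding l_def by (rule sum_powers_le_exp2)
    also have "\<dots> \<le> 2 ^ (l * n + l)" by (intro power_increasing) auto
    also have "\<dots> \<le> l * 2 ^ (l * n + l) + l" unfolding l_def by simp
    finally show ?thesis .
  qed
  moreover have "l \<noteq> 0" by (simp add: l_def)
  ultimately show ?thesis unfolding growth_le_def by blast
qed

lemma exp_le_aut_growth:
  assumes "finite S"
    and witnesses: "\<And>n. \<exists>X \<subseteq> carrier G. 2 ^ n \<le> card (aut_orbit G ` X) \<and> (\<forall>g\<in>X. len g \<le> c * n + c)"
  shows "growth_le (\<lambda>n. 2 ^ n) (aut_growth G S)"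
proof -
  have "2 ^ n \<le> (c + 1) * aut_growth G S ((c + 1) * n + (c + 1)) + (c + 1)" for n
  proof -
    obtain X where X: "X \<subseteq> carrier G" "2 ^ n \<le> card (aut_orbit G ` X)" "\<forall>g\<in>X. len g \<le> c * n + c"
      using witnesses by blast
    have "X \<subseteq> {g \<in> carrier G. len g \<le> (c + 1) * n + (c + 1)}"
      using X(1,3) by fastforce
    then have "card (aut_orbit G ` X) \<le> aut_growth G S ((c + 1) * n + (c + 1))"
      unfolding aut_growth_eq_card using finite_word_ball[OF assms(1)]
      by (intro card_mono image_mono) auto
    then show ?thesis using X(2) by (simp add: trans_le_add1)
  qed
  then show ?thesis unfolding growth_le_def by (intro exI[of _ "c + 1"]) simp
qed

end

definition is_power :: "('a, 'b) monoid_scheme \<Rightarrow> nat \<Rightarrow> 'a \<Rightarrow> bool" where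
  "is_power G q g \<longleftrightarrow> (\<exists>x\<in>carrier G. x [^]\<^bsub>G\<^esub> q = g)"

lemma (in group) is_power_iso:
  assumes "\<phi> \<in> iso G G" "is_power G q g"
  shows "is_power G q (\<phi> g)"
proof -
  obtain x where x: "x \<in> carrier G" "x [^] q = g" using assms(2) by (auto simp: is_power_def)
  have hom: "\<phi> \<in> hom G G" using assms(1) by (simp add: iso_def)
  then have "\<phi> x \<in> carrier G" "\<phi> x [^] q = \<phi> g"
    using x hom_nat_pow[OF hom x(1) is_group is_group] by (auto simp: hom_def)
  then show ?thesis by (auto simp: is_power_def)
qed

lemma (in group) is_power_aut_orbit_eq:
  assumes "aut_orbit G g = aut_orbit G h"
  shows "is_power G q g \<longleftrightarrow> is_power G q h"
proof -
  have self: "g' \<in> aut_orbit G g'" for g'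
    unfolding aut_orbit_def using id_iso[of G] by (metis (mono_tags, lifting) id_apply mem_Collect_eq)
  have transfer: "is_power G q h'" if "h' \<in> aut_orbit G g'" "is_power G q g'" for g' h'
    using that is_power_iso by (auto simp: aut_orbit_def)
  have "h \<in> aut_orbit G g" "g \<in> aut_orbit G h"
    using self[of h] self[of g] assms by simp_all
  then show ?thesis using transfer[of h g] transfer[of g h] by blast
qed

section \<open>Periodic points of a self-map of a finite set\<close>

lemma least_power_le_card:
  assumes "finite V" "f ` V \<subseteq> V" "x \<in> V" "(f ^^ n) x = x" "n > 0"
  shows "least_power f x \<le> card V"
proof -
  let ?t = "least_power f x"
  have t: "(f ^^ ?t) x = x" "?t > 0" using least_powerI[OF assms(4,5)] by auto
  have no_repeat: False if "i < j" "j < ?t" "(f ^^ i) x = (f ^^ j) x" for i j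
  proof -
    have "(f ^^ (?t - j + i)) x = (f ^^ (?t - j)) ((f ^^ i) x)"
      by (simp only: funpow_add comp_apply)
    also have "\<dots> = (f ^^ (?t - j + j)) x"
      using that(3) by (simp only: funpow_add comp_apply)
    also have "\<dots> = x" using that(2) t(1) by simp
    finally have "?t \<le> ?t - j + i" using that by (intro least_power_le) auto
    then show False using that by linarith
  qed
  have "inj_on (\<lambda>k. (f ^^ k) x) {..<?t}"
    by (rule inj_onI) (metis lessThan_iff linorder_neqE_nat no_repeat)
  moreover have "(\<lambda>k. (f ^^ k) x) ` {..<?t} \<subseteq> V"
  proof -
    have "(f ^^ k) x \<in> V" for k by (induction k) (use assms(2,3) in auto)
    then show ?thesis by blast
  qed
  ultimately show ?thesis using card_inj_on_le[OF _ _ assms(1)] by fastforce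
qed

lemma funpow_prime_power_period:
  assumes "finite V" "f ` V \<subseteq> V" "x \<in> V" "prime p"
    and "(f ^^ (p ^ a)) x = x" "card V \<le> p ^ b"
  shows "(f ^^ (p ^ b)) x = x"
proof -
  let ?t = "least_power f x"
  have p: "p > 0" using assms(4) prime_gt_0_nat by blast
  have t: "(f ^^ ?t) x = x" using least_powerI[OF assms(5)] p by simp
  obtain e where e: "?t = p ^ e"
    using least_power_minimal[OF assms(5)] divides_primepow_nat[OF assms(4)] by blast
  have "p ^ e \<le> p ^ b"
    using least_power_le_card[OF assms(1-3,5)] p assms(6) e by simp
  then have "e \<le> b" using assms(4) power_le_imp_le_exp prime_gt_1_nat by blast
  then have "p ^ b mod ?t = 0" using e by (simp add: le_imp_power_dvd)
  then show ?thesis using funpow_mod_eq[OF t, of "p ^ b"] by simp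
qed

section \<open>Density of squarefree numbers\<close>

lemma squarefree_eq_if_same_prime_divisors:
  fixes s s' :: nat
  assumes "squarefree s" "squarefree s'" "\<And>p. prime p \<Longrightarrow> p dvd s \<longleftrightarrow> p dvd s'"
  shows "s = s'"
proof (rule multiplicity_eq_nat)
  show "s > 0" "s' > 0" using assms(1,2) not_squarefree_0 by (metis gr0I)+
  fix p :: nat assume p: "prime p"
  have "multiplicity p s \<le> 1" "multiplicity p s' \<le> 1"
    using assms(1,2) p squarefree_factorial_semiring'' \<open>s > 0\<close> \<open>s' > 0\<close> by blast+
  moreover have "multiplicity p s > 0 \<longleftrightarrow> multiplicity p s' > 0"
    using prime_multiplicity_gt_zero_iff[of p] p assms(3)[OF p] \<open>s > 0\<close> \<open>s' > 0\<close> by simp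
  ultimately show "multiplicity p s = multiplicity p s'" by linarith
qed

lemma sum_inverse_squares_le: "K \<ge> 2 \<Longrightarrow> (\<Sum>d\<in>{3..K}. 1 / (real d)^2) \<le> 1/2 - 1 / real K"
proof (induction K rule: nat_induct_at_least)
  case (Suc K)
  have "{3..Suc K} = insert (Suc K) {3..K}" using Suc.hyps by auto
  then have "(\<Sum>d\<in>{3..Suc K}. 1 / (real d)^2) = 1 / (real (Suc K))^2 + (\<Sum>d\<in>{3..K}. 1 / (real d)^2)"
    by simp
  also have "\<dots> \<le> 1 / (real K * real (Suc K)) + (1/2 - 1 / real K)"
    using Suc by (intro add_mono divide_left_mono) (auto simp: power2_eq_square)
  also have "\<dots> = 1/2 - 1 / real (Suc K)"
  proof -
    have "real K > 0" using Suc.hyps by simp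
    then have "1 / (real K * real (Suc K)) = 1 / real K - 1 / real (Suc K)"
      by (simp add: field_simps)
    then show ?thesis by simp
  qed
  finally show ?case .
qed simp

lemma card_multiples_le: "d > 0 \<Longrightarrow> card {s \<in> {1..K}. (d::nat) dvd s} \<le> K div d"
proof -
  assume d: "d > 0"
  have "{s \<in> {1..K}. d dvd s} \<subseteq> (\<lambda>q. d * q) ` {1..K div d}"
  proof
    fix s assume "s \<in> {s \<in> {1..K}. d dvd s}"
    then obtain q where q: "s = d * q" "1 \<le> s" "s \<le> K" by auto
    then have "q \<in> {1..K div d}"
      using d by (auto simp: Suc_le_eq) (metis div_le_mono nonzero_mult_div_cancel_left not_gr0)
    then show "s \<in> (\<lambda>q. d * q) ` {1..K div d}" using q by auto
  qed
  then have "card {s \<in> {1..K}. d dvd s} \<le> card ((\<lambda>q. d * q) ` {1..K div d})"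
    by (rule card_mono[rotated]) simp
  also have "\<dots> \<le> card {1..K div d}" by (rule card_image_le) simp
  finally show ?thesis by simp
qed

lemma not_squarefree_subset:
  "{s \<in> {1..K}. \<not> squarefree (s::nat)} \<subseteq> (\<Union>d\<in>{2..K}. {s \<in> {1..K}. d^2 dvd s})"
proof
  fix s assume "s \<in> {s \<in> {1..K}. \<not> squarefree s}"
  then have s: "1 \<le> s" "s \<le> K" "\<not> squarefree s" by auto
  then obtain x where x: "x^2 dvd s" "\<not> x dvd 1" by (auto elim: not_squarefreeE)
  have "x \<noteq> 0" using x(1) s(1) by (auto simp: power2_eq_square)
  moreover have "x \<noteq> 1" using x(2) by auto
  ultimately have "x \<ge> 2" by linarith
  moreover have "x \<le> s"
  proof -
    have "x \<le> x^2" by (simp add: power2_eq_square)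
    also have "\<dots> \<le> s" using x(1) s(1) by (simp add: dvd_imp_le)
    finally show ?thesis .
  qed
  ultimately show "s \<in> (\<Union>d\<in>{2..K}. {s \<in> {1..K}. d^2 dvd s})" using s x(1) by auto
qed

lemma card_not_squarefree_le: "4 * card {s \<in> {1..K}. \<not> squarefree (s::nat)} \<le> 3 * K"
proof -
  have "card {s \<in> {1..K}. \<not> squarefree s} \<le> card (\<Union>d\<in>{2..K}. {s \<in> {1..K}. d^2 dvd s})"
    by (rule card_mono[OF _ not_squarefree_subset]) auto
  also have "\<dots> \<le> (\<Sum>d\<in>{2..K}. card {s \<in> {1..K}. d^2 dvd s})"
    by (rule card_UN_le) simp
  also have "\<dots> \<le> (\<Sum>d\<in>{2..K}. K div d^2)"
    by (rule sum_mono) (rule card_multiples_le, simp)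
  finally have "real (card {s \<in> {1..K}. \<not> squarefree s}) \<le> (\<Sum>d\<in>{2..K}. real (K div d^2))"
    by (simp flip: of_nat_sum)
  also have "\<dots> \<le> (\<Sum>d\<in>{2..K}. real K * (1 / (real d)^2))"
    by (rule sum_mono) (metis of_nat_div_le_of_nat of_nat_power times_divide_eq_right mult_1_right)
  also have "\<dots> \<le> 3/4 * real K"
  proof (cases "K \<ge> 2")
    case True
    then have "{2..K} = insert 2 {3..K}" by auto
    then have "(\<Sum>d\<in>{2..K}. real K * (1 / (real d)^2)) = real K / 4 + real K * (\<Sum>d\<in>{3..K}. 1 / (real d)^2)"
      by (simp add: sum_distrib_left)
    also have "\<dots> \<le> real K / 4 + real K * (1/2)"
    proof -
      have "0 \<le> 1 / real K" by simp
      then have "(\<Sum>d\<in>{3..K}. 1 / (real d)^2) \<le> 1/2" using sum_inverse_squares_le[OF True] by linarith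
      then show ?thesis by (intro add_left_mono mult_left_mono) auto
    qed
    finally show ?thesis by simp
  qed simp
  finally show ?thesis by linarith
qed

lemma card_squarefree_ge: "K \<le> 4 * card {s \<in> {1..K}. squarefree (s::nat)}"
proof -
  have "card ({s \<in> {1..K}. squarefree s} \<union> {s \<in> {1..K}. \<not> squarefree s})
      = card {s \<in> {1..K}. squarefree s} + card {s \<in> {1..K}. \<not> squarefree s}"
    by (rule card_Un_disjoint) auto
  moreover have "{s \<in> {1..K}. squarefree s} \<union> {s \<in> {1..K}. \<not> squarefree s} = {1..K}" by auto
  ultimately have "K = card {s \<in> {1..K}. squarefree s} + card {s \<in> {1..K}. \<not> squarefree s}"
    by simp
  then show ?thesis using card_not_squarefree_le[of K] by linarith
qed

section \<open>The group SL_m(Z) and its transvections\<close>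

(* HOL-Analysis inverts matrices over fields only; over a commutative ring the inverse of a
   determinant-one matrix is its adjugate. *)

definition adjugate :: "'a::comm_ring_1^'n::finite^'n \<Rightarrow> 'a^'n^'n" where
  "adjugate A = (\<chi> k c. det (\<chi> r. if r = c then axis k 1 else row r A))"

lemma matrix_mul_adjugate: "A ** adjugate A = (\<chi> r c. if r = c then det A else 0)"
proof -
  have "(A ** adjugate A) $ r $ c = det (\<chi> i. if i = c then row r A else row i A)" for r c
  proof -
    have "(A ** adjugate A) $ r $ c
        = (\<Sum>k\<in>UNIV. det (\<chi> i. if i = c then A $ r $ k *s axis k 1 else row i A))"
      by (simp add: matrix_matrix_mult_def adjugate_def det_row_mul)
    also have "\<dots> = det (\<chi> i. if i = c then (\<Sum>k\<in>UNIV. A $ r $ k *s axis k 1) else row i A)"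
      by (rule det_linear_row_sum[symmetric]) simp
    also have "(\<Sum>k\<in>UNIV. A $ r $ k *s axis k 1) = row r A"
      by (simp add: vec_eq_iff row_def axis_def sum.delta' if_distrib cong: if_cong)
    finally show ?thesis .
  qed
  moreover have "det (\<chi> i. if i = c then row r A else row i A) = (if r = c then det A else 0)" for r c
  proof (cases "r = c")
    case True
    then have "(\<chi> i. if i = c then row r A else row i A) = A"
      by (simp add: vec_eq_iff row_def)
    with True show ?thesis by simp
  next
    case False
    then have "det (\<chi> i. if i = c then row r A else row i A) = 0"
      by (intro det_identical_rows[of r c]) (auto simp: row_def)
    with False show ?thesis by simp
  qed
  ultimately show ?thesis by (simp add: vec_eq_iff)
qed

lemma det_eq_1_imp_left_inverse:
  fixes A :: "'a::comm_ring_1^'n::finite^'n"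
  assumes "det A = 1"
  shows "\<exists>B. det B = 1 \<and> B ** A = mat 1"
proof -
  define B where "B = transpose (adjugate (transpose A))"
  have inv: "transpose A ** adjugate (transpose A) = mat 1"
    using assms by (simp add: matrix_mul_adjugate vec_eq_iff mat_def)
  then have "B ** A = mat 1"
    unfolding B_def by (metis matrix_transpose_mul transpose_mat transpose_transpose)
  moreover have "det B = 1"
    using arg_cong[OF inv, of det] assms by (simp add: B_def det_mul)
  ultimately show ?thesis by blast
qed

lemma carrier_SL_group: "carrier SL_group = {A. det A = 1}"
  and mult_SL_group [simp]: "x \<otimes>\<^bsub>SL_group\<^esub> y = x ** y"
  and one_SL_group [simp]: "\<one>\<^bsub>SL_group\<^esub> = mat 1"
  by (simp_all add: SL_group_def)

lemma group_SL_group: "group SL_group"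
proof (rule groupI)
  fix A assume "A \<in> carrier SL_group"
  then show "\<exists>B\<in>carrier SL_group. B \<otimes>\<^bsub>SL_group\<^esub> A = \<one>\<^bsub>SL_group\<^esub>"
    using det_eq_1_imp_left_inverse by (fastforce simp: carrier_SL_group)
qed (auto simp: carrier_SL_group det_mul matrix_mul_assoc)

definition matrix_unit :: "'n::finite \<Rightarrow> 'n \<Rightarrow> 'a::comm_ring_1 \<Rightarrow> 'a^'n^'n" where
  "matrix_unit a b x = (\<chi> r c. if r = a \<and> c = b then x else 0)"

definition transvection :: "'n::finite \<Rightarrow> 'n \<Rightarrow> 'a::comm_ring_1 \<Rightarrow> 'a^'n^'n" where
  "transvection a b x = mat 1 + matrix_unit a b x"

lemma matrix_add_rdistrib: "(B + C) ** A = B ** A + C ** A"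
  by (simp add: matrix_matrix_mult_def vec_eq_iff distrib_right sum.distrib)

lemma matrix_unit_mult:
  "matrix_unit a b x ** matrix_unit c d y = (if b = c then matrix_unit a d (x * y) else 0)"
proof -
  have "(matrix_unit a b x ** matrix_unit c d y) $ r $ s
      = (if b = c then matrix_unit a d (x * y) else 0) $ r $ s" for r s
    by (auto simp: matrix_matrix_mult_def matrix_unit_def if_distrib[of "\<lambda>t. t * _"] sum.delta
        cong: if_cong)
  then show ?thesis by (simp add: vec_eq_iff)
qed

lemma matrix_unit_add: "matrix_unit a b x + matrix_unit a b y = matrix_unit a b (x + y)"
  and matrix_unit_0 [simp]: "matrix_unit a b 0 = 0"
  and matrix_unit_numeral [simp]: "numeral k * matrix_unit a b x = matrix_unit a b (numeral k * x)"
  by (simp_all add: vec_eq_iff matrix_unit_def)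

lemma det_transvection:
  fixes a b :: "'n::finite"
  assumes "a \<noteq> b"
  shows "det (transvection a b x :: 'a::comm_ring_1^'n^'n) = 1"
proof -
  have "transvection a b x = (\<chi> k. if k = a then row a (mat 1) + x *s row b (mat 1) else row k (mat 1))"
    using assms by (auto simp: vec_eq_iff transvection_def matrix_unit_def row_def mat_def)
  then show ?thesis using det_row_operation[OF assms, of "mat 1" x] by simp
qed

lemma transvection_mult:
  "a \<noteq> b \<Longrightarrow> transvection a b x ** transvection a b y = transvection a b (x + y)"
  by (simp add: transvection_def matrix_add_ldistrib matrix_add_rdistrib matrix_unit_mult
      matrix_unit_add add.assoc)

lemma matrix_vector_mult_axis: "(A *v axis k 1) $ i = (A $ i $ k :: 'a::comm_semiring_1)"
  by (simp add: matrix_vector_mult_def axis_def if_distrib[of "times _"] cong: if_cong)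

lemma transvection_mult_axis:
  "a \<noteq> b \<Longrightarrow> transvection a b c *v axis b 1 = axis b 1 + axis a c"
  by (simp add: vec_eq_iff matrix_vector_mult_axis) (simp add: transvection_def matrix_unit_def mat_def axis_def)

lemma transvection_in_SL: "a \<noteq> b \<Longrightarrow> transvection a b x \<in> carrier SL_group"
  by (simp add: carrier_SL_group det_transvection)

lemma transvection_pow_SL:
  assumes "a \<noteq> b"
  shows "transvection a b x [^]\<^bsub>SL_group\<^esub> k = transvection a b (int k * x)"
  by (induction k) (simp_all add: transvection_def transvection_mult[OF assms, unfolded transvection_def]
      algebra_simps)

definition vec_mod :: "int \<Rightarrow> int^'n::finite \<Rightarrow> int^'n" where
  "vec_mod p v = (\<chi> r. v $ r mod p)"

lemma vec_mod_mult_vec_mod: "vec_mod p (A *v vec_mod p v) = vec_mod p (A *v v)"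
proof -
  have "(\<Sum>k\<in>UNIV. A $ r $ k * (v $ k mod p)) mod p = (\<Sum>k\<in>UNIV. A $ r $ k * v $ k) mod p" for r
  proof -
    have "(\<Sum>k\<in>UNIV. A $ r $ k * (v $ k mod p)) mod p = (\<Sum>k\<in>UNIV. A $ r $ k * (v $ k mod p) mod p) mod p"
      by (simp only: mod_sum_eq)
    also have "\<dots> = (\<Sum>k\<in>UNIV. A $ r $ k * v $ k mod p) mod p"
      by (simp only: mod_mult_right_eq)
    also have "\<dots> = (\<Sum>k\<in>UNIV. A $ r $ k * v $ k) mod p"
      by (simp only: mod_sum_eq)
    finally show ?thesis .
  qed
  then show ?thesis by (simp add: vec_mod_def matrix_vector_mult_def vec_eq_iff)
qed

lemma funpow_vec_mod:
  "((\<lambda>v. vec_mod p (A *v v)) ^^ k) (vec_mod p v) = vec_mod p ((A [^]\<^bsub>SL_group\<^esub> k) *v v)"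
proof (induction k arbitrary: v)
  case (Suc k)
  have "((\<lambda>v. vec_mod p (A *v v)) ^^ Suc k) (vec_mod p v)
      = ((\<lambda>v. vec_mod p (A *v v)) ^^ k) (vec_mod p (A *v v))"
    by (simp add: funpow_Suc_right vec_mod_mult_vec_mod del: funpow.simps)
  then show ?case by (simp add: Suc.IH matrix_vector_mul_assoc)
qed simp

lemma card_range_vec_mod:
  assumes "p > 0"
  shows "finite (range (vec_mod p) :: (int^'n::finite) set)"
    and "card (range (vec_mod p) :: (int^'n) set) \<le> nat p ^ CARD('n)"
proof -
  have "vec_mod p v = vec_lambda (\<lambda>r. v $ r mod p)" "(\<lambda>r. v $ r mod p) \<in> UNIV \<rightarrow>\<^sub>E {0..<p}" for v :: "int^'n"
    using assms by (simp_all add: vec_mod_def PiE_iff)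
  then have sub: "(range (vec_mod p) :: (int^'n) set) \<subseteq> vec_lambda ` (UNIV \<rightarrow>\<^sub>E {0..<p})"
    by blast
  have fin: "finite (UNIV \<rightarrow>\<^sub>E {0..<p} :: ('n \<Rightarrow> int) set)" by (simp add: finite_PiE)
  then show "finite (range (vec_mod p) :: (int^'n) set)" using sub finite_subset by blast
  have "card (range (vec_mod p) :: (int^'n) set) \<le> card (vec_lambda ` (UNIV \<rightarrow>\<^sub>E {0..<p}) :: (int^'n) set)"
    using sub fin by (intro card_mono) auto
  also have "\<dots> \<le> card (UNIV \<rightarrow>\<^sub>E {0..<p} :: ('n \<Rightarrow> int) set)" using fin by (rule card_image_le)
  also have "\<dots> = nat p ^ CARD('n)" by (simp add: card_PiE)
  finally show "card (range (vec_mod p) :: (int^'n) set) \<le> nat p ^ CARD('n)" .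
qed

lemma vec_mod_transvection_axis:
  assumes "a \<noteq> b" "q > 1"
  shows "vec_mod q (transvection a b c *v axis b 1) = axis b 1 \<longleftrightarrow> q dvd c"
proof -
  have reduced: "vec_mod q (transvection a b c *v axis b 1)
      = (\<chi> r. if r = b then 1 else if r = a then c mod q else 0)"
    using assms by (simp add: transvection_mult_axis) (simp add: vec_eq_iff vec_mod_def axis_def)
  show ?thesis
  proof
    assume "vec_mod q (transvection a b c *v axis b 1) = axis b 1"
    then have "(\<chi> r. if r = b then 1 else if r = a then c mod q else 0) $ a = axis b 1 $ a"
      by (simp only: reduced)
    then show "q dvd c" using assms(1) by (simp add: axis_def dvd_eq_mod_eq_0)
  next
    assume "q dvd c"
    then show "vec_mod q (transvection a b c *v axis b 1) = axis b 1"
      unfolding reduced by (simp add: vec_eq_iff axis_def)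
  qed
qed

lemma prime_dvd_if_transvection_power:
  fixes x :: "int^'n::finite^'n" and a b :: 'n and p :: nat and N :: int
  assumes "a \<noteq> b" "prime p" "x \<in> carrier SL_group"
    and root: "x [^]\<^bsub>SL_group\<^esub> (p ^ CARD('n)) = transvection a b N"
  shows "int p dvd N"
proof -
  interpret SL: group "SL_group :: (int^'n^'n) monoid" by (rule group_SL_group)
  let ?f = "\<lambda>v. vec_mod (int p) (x *v v)" and ?e = "axis b 1 :: int^'n"
  have p: "int p > 1" using assms(2) prime_gt_1_nat by auto
  have e: "vec_mod (int p) ?e = ?e" using p by (simp add: vec_eq_iff vec_mod_def axis_def)
  have iter: "(?f ^^ k) ?e = vec_mod (int p) ((x [^]\<^bsub>SL_group\<^esub> k) *v ?e)" for k
    using funpow_vec_mod[where p = "int p" and A = x and v = ?e] e by simp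
  note fixes_mod = vec_mod_transvection_axis[OF assms(1) p]
  have "x [^]\<^bsub>SL_group\<^esub> (p ^ Suc CARD('n)) = (x [^]\<^bsub>SL_group\<^esub> (p ^ CARD('n))) [^]\<^bsub>SL_group\<^esub> p"
    using SL.nat_pow_pow[OF assms(3)] by (simp add: mult.commute)
  also have "\<dots> = transvection a b N [^]\<^bsub>SL_group\<^esub> p" by (simp add: root)
  also have "\<dots> = transvection a b (int p * N)" by (rule transvection_pow_SL[OF assms(1)])
  finally have fixed: "(?f ^^ (p ^ Suc CARD('n))) ?e = ?e" using iter fixes_mod by simp
  have e_in: "?e \<in> range (vec_mod (int p))" using e by (metis rangeI)
  have maps: "?f ` range (vec_mod (int p)) \<subseteq> range (vec_mod (int p))" by blast
  have fin: "finite (range (vec_mod (int p)) :: (int^'n) set)"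
    and card: "card (range (vec_mod (int p)) :: (int^'n) set) \<le> p ^ CARD('n)"
    using card_range_vec_mod[where p = "int p", where 'n = 'n] p by simp_all
  have "(?f ^^ (p ^ CARD('n))) ?e = ?e"
    by (rule funpow_prime_power_period[OF fin maps e_in assms(2) fixed card])
  then show ?thesis using iter root fixes_mod by simp
qed

section \<open>Short words for transvections\<close>

definition cat_map :: "int \<times> int \<Rightarrow> int \<times> int" where
  "cat_map v = (2 * fst v + snd v, fst v + snd v)"

definition cat_map_inv :: "int \<times> int \<Rightarrow> int \<times> int" where
  "cat_map_inv v = (fst v - snd v, 2 * snd v - fst v)"

(* The trace of the k-th power of [[2,1],[1,1]], i.e. the Lucas number L_(2k). *)

fun cat_trace :: "nat \<Rightarrow> int" where
  "cat_trace 0 = 2"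
| "cat_trace (Suc 0) = 3"
| "cat_trace (Suc (Suc k)) = 3 * cat_trace (Suc k) - cat_trace k"

lemma cat_trace_mono: "0 \<le> cat_trace k \<and> cat_trace k \<le> cat_trace (Suc k)"
  by (induction k rule: cat_trace.induct) auto

lemma cat_trace_Suc_le: "cat_trace (Suc k) \<le> 3 * cat_trace k"
  by (cases k rule: cat_trace.cases) (use cat_trace_mono in auto)

lemma exp2_le_cat_trace: "2 ^ k \<le> cat_trace k"
proof (induction k rule: cat_trace.induct)
  case (3 k)
  then show ?case using cat_trace_mono[of k] by simp
qed auto

lemma cat_trace_pos: "0 < cat_trace k"
  by (rule less_le_trans[OF _ exp2_le_cat_trace]) simp

lemma cat_trace_digits:
  "0 \<le> N \<Longrightarrow> N < cat_trace t \<Longrightarrow>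
   \<exists>ds r. length ds = t \<and> set ds \<subseteq> {0, 1, 2} \<and> r \<in> {0, 1} \<and> N = r + (\<Sum>k<t. ds ! k * cat_trace k)"
proof (induction t arbitrary: N)
  case 0
  then show ?case by (intro exI[of _ "[]"] exI[of _ N]) auto
next
  case (Suc t)
  define d where "d = N div cat_trace t"
  have pos: "0 < cat_trace t" by (rule cat_trace_pos)
  obtain ds r where ds: "length ds = t" "set ds \<subseteq> {0, 1, 2}" "r \<in> {0, 1}"
      "N mod cat_trace t = r + (\<Sum>k<t. ds ! k * cat_trace k)"
    using Suc.IH[of "N mod cat_trace t"] pos by auto
  have N: "N = d * cat_trace t + N mod cat_trace t" by (simp add: d_def)
  moreover have "0 \<le> N mod cat_trace t" using pos by simp
  ultimately have "d * cat_trace t < 3 * cat_trace t"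
    using Suc.prems(2) cat_trace_Suc_le[of t] by linarith
  moreover have "0 \<le> d" using Suc.prems(1) pos by (simp add: d_def pos_imp_zdiv_nonneg_iff)
  ultimately have "d \<in> {0, 1, 2}" using pos by (auto simp: mult_less_cancel_right)
  moreover have "(\<Sum>k<Suc t. (ds @ [d]) ! k * cat_trace k) = (\<Sum>k<t. ds ! k * cat_trace k) + d * cat_trace t"
    using ds(1) by (simp add: nth_append)
  ultimately show ?case
    using ds N by (intro exI[of _ "ds @ [d]"] exI[of _ r]) auto
qed

lemma cat_map_recurrence:
  "(cat_map ^^ Suc (Suc k)) v = (cat_map ^^ Suc k) v + (cat_map ^^ Suc k) v + (cat_map ^^ Suc k) v - (cat_map ^^ k) v"
  and cat_map_inv_recurrence:
  "(cat_map_inv ^^ Suc (Suc k)) v = (cat_map_inv ^^ Suc k) v + (cat_map_inv ^^ Suc k) v + (cat_map_inv ^^ Suc k) v - (cat_map_inv ^^ k) v"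
  by (simp_all add: cat_map_def cat_map_inv_def prod_eq_iff)

lemma cat_map_pow_add_inv: "(cat_map ^^ k) (d, 0) + (cat_map_inv ^^ k) (d, 0) = (d * cat_trace k, 0)"
proof (induction k rule: cat_trace.induct)
  case (3 k)
  let ?A = "\<lambda>n. (cat_map ^^ n) (d, 0)" and ?B = "\<lambda>n. (cat_map_inv ^^ n) (d, 0)"
  have "?A (Suc (Suc k)) + ?B (Suc (Suc k))
      = (?A (Suc k) + ?B (Suc k)) + (?A (Suc k) + ?B (Suc k)) + (?A (Suc k) + ?B (Suc k)) - (?A k + ?B k)"
    unfolding cat_map_recurrence cat_map_inv_recurrence by (simp add: algebra_simps del: funpow.simps)
  also have "\<dots> = (d * cat_trace (Suc (Suc k)), 0)"
    using 3 by (simp add: algebra_simps del: funpow.simps)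
  finally show ?case .
qed (simp_all add: cat_map_def cat_map_inv_def)

definition horner :: "(int \<times> int \<Rightarrow> int \<times> int) \<Rightarrow> int list \<Rightarrow> int \<times> int" where
  "horner T ds = foldr (\<lambda>d v. (d, 0) + T v) ds 0"

lemma horner_eq_sum:
  assumes additive: "\<And>v w. T (v + w) = T v + T w"
  shows "horner T ds = (\<Sum>k<length ds. (T ^^ k) (ds ! k, 0))"
proof (induction ds)
  case Nil
  show ?case by (simp add: horner_def)
next
  case (Cons d ds)
  have "T 0 = 0" using additive[of 0 0] by simp
  then have "T (\<Sum>k<length ds. (T ^^ k) (ds ! k, 0)) = (\<Sum>k<length ds. (T ^^ Suc k) (ds ! k, 0))"
    using sum_comp_morphism[of T "\<lambda>k. (T ^^ k) (ds ! k, 0)" "{..<length ds}"] additive by simp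
  then show ?case
    using Cons by (simp add: horner_def sum.lessThan_Suc_shift del: sum.lessThan_Suc)
qed

lemma horner_cat_map_add_inv:
  "horner cat_map ds + horner cat_map_inv ds = (\<Sum>k<length ds. ds ! k * cat_trace k, 0)"
proof -
  have "horner cat_map ds + horner cat_map_inv ds
      = (\<Sum>k<length ds. (cat_map ^^ k) (ds ! k, 0) + (cat_map_inv ^^ k) (ds ! k, 0))"
    by (simp add: horner_eq_sum cat_map_def cat_map_inv_def sum.distrib prod_eq_iff algebra_simps)
  also have "\<dots> = (\<Sum>k<length ds. (ds ! k * cat_trace k, 0))"
    by (simp add: cat_map_pow_add_inv)
  finally show ?thesis by (simp add: prod_eq_iff fst_sum snd_sum)
qed

locale three_indices =
  fixes i j l :: "'n::finite"
  assumes distinct_indices: "i \<noteq> j" "i \<noteq> l" "j \<noteq> l"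
begin

lemmas indices_distinct = distinct_indices distinct_indices[symmetric]

definition shear :: "int \<times> int \<Rightarrow> int^'n^'n" where
  "shear v = mat 1 + matrix_unit i l (fst v) + matrix_unit j l (snd v)"

definition cat :: "int^'n^'n" where
  "cat = transvection i j 1 ** transvection j i 1"

definition cat_inv :: "int^'n^'n" where
  "cat_inv = transvection j i (-1) ** transvection i j (-1)"

lemma shear_eq_transvections: "shear v = transvection i l (fst v) ** transvection j l (snd v)"
  using indices_distinct by (simp add: shear_def transvection_def matrix_add_ldistrib matrix_add_rdistrib
      matrix_unit_mult add.assoc)

lemma shear_fst: "shear (a, 0) = transvection i l a"
  by (simp add: shear_def transvection_def)

lemma shear_zero: "shear 0 = mat 1"
  by (simp add: shear_def)

lemma shear_add: "shear v ** shear w = shear (v + w)"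
  using indices_distinct by (simp add: shear_def matrix_add_ldistrib matrix_add_rdistrib matrix_unit_mult)
    (simp add: vec_eq_iff matrix_unit_def)

lemma cat_conj_shear: "cat ** shear v ** cat_inv = shear (cat_map v)"
  using indices_distinct
  by (simp add: shear_def cat_def cat_inv_def transvection_def cat_map_def matrix_add_ldistrib
      matrix_add_rdistrib matrix_unit_mult matrix_mul_assoc)
    (simp add: vec_eq_iff matrix_unit_def mat_def)

lemma cat_inv_conj_shear: "cat_inv ** shear v ** cat = shear (cat_map_inv v)"
  using indices_distinct
  by (simp add: shear_def cat_def cat_inv_def transvection_def cat_map_inv_def matrix_add_ldistrib
      matrix_add_rdistrib matrix_unit_mult matrix_mul_assoc)
    (simp add: vec_eq_iff matrix_unit_def mat_def)

lemma shear_in_SL: "shear v \<in> carrier SL_group"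
  and cat_in_SL: "cat \<in> carrier SL_group"
  and cat_inv_in_SL: "cat_inv \<in> carrier SL_group"
  using indices_distinct by (simp_all add: carrier_SL_group shear_eq_transvections cat_def cat_inv_def
      det_mul det_transvection)

lemma foldr_conj_shear:
  assumes "\<And>v. a ** shear v ** b = shear (T v)"
  shows "foldr (\<lambda>d x. shear (d, 0) ** (a ** x ** b)) ds (mat 1) = shear (horner T ds)"
  by (induction ds) (simp_all add: horner_def shear_zero assms shear_add)

lemma transvection_eq_horner_products:
  assumes "N = r + (\<Sum>k<length ds. ds ! k * cat_trace k)"
  shows "transvection i l N = shear (r, 0)
    ** foldr (\<lambda>d x. shear (d, 0) ** (cat ** x ** cat_inv)) ds (mat 1)
    ** foldr (\<lambda>d x. shear (d, 0) ** (cat_inv ** x ** cat)) ds (mat 1)"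
proof -
  have "(r, 0) + (horner cat_map ds + horner cat_map_inv ds) = (N, 0)"
    by (simp add: horner_cat_map_add_inv assms)
  then show ?thesis
    by (simp add: foldr_conj_shear cat_conj_shear cat_inv_conj_shear shear_add add.assoc
        flip: shear_fst)
qed

lemma word_length_transvection_le_digits:
  fixes S :: "(int^'n^'n) set"
  assumes "generated_group SL_group S"
    and digits: "\<And>d. d \<in> set ds \<Longrightarrow> word_length SL_group S (shear (d, 0)) \<le> D"
    and N: "N = r + (\<Sum>k<length ds. ds ! k * cat_trace k)"
  shows "word_length SL_group S (transvection i l N) \<le> word_length SL_group S (shear (r, 0))
    + 2 * ((D + word_length SL_group S cat + word_length SL_group S cat_inv) * length ds)"
proof -
  interpret generated_group SL_group S by fact
  let ?P = "foldr (\<lambda>d x. shear (d, 0) ** (cat ** x ** cat_inv)) ds (mat 1)"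
  let ?Q = "foldr (\<lambda>d x. shear (d, 0) ** (cat_inv ** x ** cat)) ds (mat 1)"
  have carrier: "?P \<in> carrier SL_group" "?Q \<in> carrier SL_group"
    by (simp_all add: foldr_conj_shear cat_conj_shear cat_inv_conj_shear shear_in_SL)
  have shears: "(\<lambda>d. shear (d, 0)) ` set ds \<subseteq> carrier SL_group" using shear_in_SL by blast
  have "len ?P \<le> (D + len cat + len cat_inv) * length ds"
    "len ?Q \<le> (D + len cat + len cat_inv) * length ds"
    using word_length_foldr_conj[OF cat_in_SL cat_inv_in_SL shears digits]
      word_length_foldr_conj[OF cat_inv_in_SL cat_in_SL shears digits]
    by (simp_all add: algebra_simps)
  moreover have "len (shear (r, 0) ** ?P ** ?Q) \<le> len (shear (r, 0) ** ?P) + len ?Q"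
    using word_length_mult[of "shear (r, 0) ** ?P" ?Q] carrier shear_in_SL m_closed by simp
  moreover have "len (shear (r, 0) ** ?P) \<le> len (shear (r, 0)) + len ?P"
    using word_length_mult[of "shear (r, 0)" ?P] carrier shear_in_SL by simp
  ultimately show ?thesis unfolding transvection_eq_horner_products[OF N] by linarith
qed

lemma word_length_transvection_le:
  fixes S :: "(int^'n^'n) set"
  assumes "generated_group SL_group S"
  shows "\<exists>c. \<forall>t N. 0 \<le> N \<longrightarrow> N < cat_trace t \<longrightarrow>
    word_length SL_group S (transvection i l N) \<le> c * t + c"
proof -
  interpret generated_group SL_group S by fact
  define D where "D = len (shear (0, 0)) + len (shear (1, 0)) + len (shear (2, 0))"
  define E where "E = D + len cat + len cat_inv"
  have digit: "len (shear (d, 0)) \<le> D" if "d \<in> {0, 1, 2}" for d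
    using that by (auto simp: D_def)
  have "len (transvection i l N) \<le> (D + 2 * E) * t + (D + 2 * E)"
    if N: "0 \<le> N" "N < cat_trace t" for t N
  proof -
    obtain ds r where ds: "length ds = t" "set ds \<subseteq> {0, 1, 2}" "r \<in> {0, 1}"
        "N = r + (\<Sum>k<t. ds ! k * cat_trace k)"
      using cat_trace_digits[OF N] by blast
    have digits: "\<And>d. d \<in> set ds \<Longrightarrow> len (shear (d, 0)) \<le> D" using digit ds(2) by blast
    have "N = r + (\<Sum>k<length ds. ds ! k * cat_trace k)" using ds(1,4) by simp
    from word_length_transvection_le_digits[where ds = ds and D = D, OF assms digits this]
    have "len (transvection i l N) \<le> len (shear (r, 0)) + 2 * (E * t)"
      using ds(1) by (simp add: E_def)
    moreover have "len (shear (r, 0)) \<le> D" using digit ds(3) by auto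
    ultimately show ?thesis unfolding distrib_right by linarith
  qed
  then show ?thesis by blast
qed

definition witness :: "nat \<Rightarrow> int^'n^'n" where
  "witness s = transvection i l (int s ^ CARD('n))"

lemma witness_in_SL: "witness s \<in> carrier SL_group"
  using indices_distinct by (simp add: witness_def transvection_in_SL)

lemma word_length_witness_le:
  fixes S :: "(int^'n^'n) set"
  assumes "generated_group SL_group S"
  shows "\<exists>c. \<forall>n s. s \<le> 2 ^ (n + 2) \<longrightarrow> word_length SL_group S (witness s) \<le> c * n + c"
proof -
  obtain c where c: "\<And>t N. 0 \<le> N \<Longrightarrow> N < cat_trace t \<Longrightarrow>
      word_length SL_group S (transvection i l N) \<le> c * t + c"
    using word_length_transvection_le[OF assms] by blast
  let ?m = "CARD('n)"
  have "word_length SL_group S (witness s) \<le> (c * (2 * ?m + 2)) * n + c * (2 * ?m + 2)"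
    if "s \<le> 2 ^ (n + 2)" for n s
  proof -
    let ?t = "(n + 2) * ?m + 1"
    have "int s ^ ?m \<le> 2 ^ ((n + 2) * ?m)"
      using that by (metis of_nat_le_iff of_nat_numeral of_nat_power power_mono power_mult zero_le)
    also have "\<dots> < 2 ^ ?t" by simp
    also have "\<dots> \<le> cat_trace ?t" by (rule exp2_le_cat_trace)
    finally have "word_length SL_group S (witness s) \<le> c * ?t + c"
      unfolding witness_def by (intro c) auto
    also have "\<dots> \<le> (c * (2 * ?m + 2)) * n + c * (2 * ?m + 2)"
      by (simp add: algebra_simps)
    finally show ?thesis .
  qed
  then show ?thesis by blast
qed

lemma is_power_witness_iff:
  assumes "prime p"
  shows "is_power SL_group (p ^ CARD('n)) (witness s) \<longleftrightarrow> p dvd s"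
proof
  assume "is_power SL_group (p ^ CARD('n)) (witness s)"
  then obtain x where "x \<in> carrier SL_group" "x [^]\<^bsub>SL_group\<^esub> (p ^ CARD('n)) = witness s"
    by (auto simp: is_power_def)
  then have "int p dvd int s ^ CARD('n)"
    using prime_dvd_if_transvection_power indices_distinct assms unfolding witness_def by blast
  then show "p dvd s"
    using assms prime_dvd_power by (metis of_nat_dvd_iff of_nat_power)
next
  assume "p dvd s"
  then obtain q where "s = p * q" by blast
  then have "transvection i l (int q ^ CARD('n)) [^]\<^bsub>SL_group\<^esub> (p ^ CARD('n)) = witness s"
    using indices_distinct by (simp add: transvection_pow_SL witness_def power_mult_distrib)
  then show "is_power SL_group (p ^ CARD('n)) (witness s)"
    using transvection_in_SL indices_distinct unfolding is_power_def by blast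
qed

lemma inj_on_aut_orbit_witness: "inj_on (\<lambda>s. aut_orbit SL_group (witness s)) {s. squarefree s}"
proof (rule inj_onI)
  fix s s' assume "s \<in> {s. squarefree s}" "s' \<in> {s. squarefree s}"
    and orbit: "aut_orbit SL_group (witness s) = aut_orbit SL_group (witness s')"
  then show "s = s'"
    using group.is_power_aut_orbit_eq[OF group_SL_group orbit] is_power_witness_iff
    by (intro squarefree_eq_if_same_prime_divisors) auto
qed

lemma many_aut_orbits:
  fixes S :: "(int^'n^'n) set"
  assumes "generated_group SL_group S"
  shows "\<exists>c. \<forall>n. \<exists>X \<subseteq> carrier SL_group. 2 ^ n \<le> card (aut_orbit SL_group ` X) \<and>
    (\<forall>g\<in>X. word_length SL_group S g \<le> c * n + c)"
proof -
  obtain c where c: "\<And>n s. s \<le> 2 ^ (n + 2) \<Longrightarrow> word_length SL_group S (witness s) \<le> c * n + c"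
    using word_length_witness_le[OF assms] by blast
  have "\<exists>X \<subseteq> carrier SL_group. 2 ^ n \<le> card (aut_orbit SL_group ` X) \<and>
    (\<forall>g\<in>X. word_length SL_group S g \<le> c * n + c)" for n
  proof (intro exI conjI)
    let ?SF = "{s \<in> {1..(2::nat) ^ (n + 2)}. squarefree s}"
    have "inj_on (\<lambda>s. aut_orbit SL_group (witness s)) ?SF"
      using inj_on_aut_orbit_witness by (rule inj_on_subset) blast
    then have "card (aut_orbit SL_group ` witness ` ?SF) = card ?SF"
      by (simp add: card_image image_image)
    moreover have "2 ^ (n + 2) \<le> 4 * card ?SF" by (rule card_squarefree_ge)
    ultimately show "2 ^ n \<le> card (aut_orbit SL_group ` witness ` ?SF)" by simp
    show "witness ` ?SF \<subseteq> carrier SL_group" using witness_in_SL by blast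
    show "\<forall>g\<in>witness ` ?SF. word_length SL_group S g \<le> c * n + c" using c by auto
  qed
  then show ?thesis by blast
qed

end

theorem mainTheorem18:
  fixes S :: "(int ^ 'n::finite ^ 'n) set"
  assumes "CARD('n) \<ge> 3"
    and "finite S"
    and "S \<subseteq> carrier (SL_group :: (int ^ 'n ^ 'n) monoid)"
    and "generate (SL_group :: (int ^ 'n ^ 'n) monoid) S = carrier SL_group"
  shows "exponential_aut_growth (SL_group :: (int ^ 'n ^ 'n) monoid) S"
proof -
  obtain T :: "'n set" where "card T = 3"
    using obtain_subset_with_card_n[OF assms(1)] by metis
  then obtain i j l :: 'n where "i \<noteq> j" "i \<noteq> l" "j \<noteq> l"
    by (auto simp: card_3_iff)
  then interpret three_indices i j l by unfold_locales
  have gen: "generated_group (SL_group :: (int ^ 'n ^ 'n) monoid) S"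
    by (intro generated_group.intro generated_group_axioms.intro group_SL_group assms(3,4))
  obtain c where "\<And>n. \<exists>X \<subseteq> carrier SL_group. 2 ^ n \<le> card (aut_orbit SL_group ` X) \<and>
      (\<forall>g\<in>X. word_length SL_group S g \<le> c * n + c)"
    using many_aut_orbits[OF gen] by blast
  then show ?thesis
    unfolding exponential_aut_growth_def growth_equiv_def
    using generated_group.aut_growth_le_exp[OF gen assms(2)]
      generated_group.exp_le_aut_growth[OF gen assms(2)] by blast
qed

end
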